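(* Let $\bm{A}=[\bm{A}_1\ \bm{A}_2]\in\mathbb{R}^{m\times n}$ with $\bm{A}_j\in\mathbb{R}^{m\times n_j}$, $n=n_1+n_2$, have full column rank, and suppose $\bm{A}_1^\top\bm{A}_1=\bm{I}_{n_1}$, $\bm{A}_2^\top\bm{A}_2=\bm{I}_{n_2}$ and $\bm{A}_2^\top\bm{A}_1\neq 0$. Then $\rho_{\mathrm{BGD}}^*\le(\rho_{\mathrm{HB}}^* )^2$.
   Context: $\rho(\cdot)$ denotes the spectral radius (maximum modulus of eigenvalues). For $\gamma_1,\gamma_2>0$ let $\bm{M}(\gamma_1,\gamma_2):=\left(\bm{I}-\begin{bmatrix}0&0\\ \gamma_2\bm{A}_2^\top\bm{A}_1&\gamma_2\bm{A}_2^\top\bm{A}_2\end{bmatrix}\right)\left(\bm{I}-\begin{bmatrix}\gamma_1\bm{A}_1^\top\bm{A}_1&\gamma_1\bm{A}_1^\top\bm{A}_2\\0&0\end{bmatrix}\right)$, the iteration matrix of two-block gradient descent ($\bm{x}_1^+=\bm{x}_1-\gamma_1\bm{A}_1^\top(\bm{A}\bm{x}-\bm{y})$, then $\bm{x}_2^+=\bm{x}_2-\gamma_2\bm{A}_2^\top(\bm{A}_1\bm{x}_1^++\bm{A}_2\bm{x}_2-\bm{y})$) on $F(\bm{x})=\frac12\|\bm{A}\bm{x}-\bm{y}\|_2^2$. Define $\rho_{\mathrm{BGD}}^*:=\min_{\gamma_1>0,\gamma_2>0}\rho(\bm{M}(\gamma_1,\gamma_2))$. For $\alpha>0,\beta\ge0$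 let $\bm{N}(\alpha,\beta):=\begin{bmatrix}0&\bm{I}\\-\beta\bm{I}&(1+\beta)\bm{I}-\alpha\bm{A}^\top\bm{A}\end{bmatrix}$ (heavy-ball iteration matrix) and $\rho_{\mathrm{HB}}^*:=\min_{\alpha>0,\beta\ge0}\rho(\bm{N}(\alpha,\beta))$. *)

theory Defs
  imports "Jordan_Normal_Form.Spectral_Radius" "Jordan_Normal_Form.DL_Rank"
begin

text \<open>Horizontal concatenation [A1 A2] of two matrices with the same number of rows.\<close>
definition hcat :: "real mat \<Rightarrow> real mat \<Rightarrow> real mat" where
  "hcat A1 A2 = four_block_mat A1 A2 (0\<^sub>m 0 (dim_col A1)) (0\<^sub>m 0 (dim_col A2))"

definition cmat :: "real mat \<Rightarrow> complex mat" where
  "cmat M = map_mat complex_of_real M"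

definition BGD_iter :: "real mat \<Rightarrow> real mat \<Rightarrow> real \<Rightarrow> real \<Rightarrow> real mat" where
  "BGD_iter A1 A2 g1 g2 =
    (let n1 = dim_col A1; n2 = dim_col A2; n = n1 + n2 in
     (1\<^sub>m n - four_block_mat (0\<^sub>m n1 n1) (0\<^sub>m n1 n2)
                (g2 \<cdot>\<^sub>m (transpose_mat A2 * A1)) (g2 \<cdot>\<^sub>m (transpose_mat A2 * A2)))
   * (1\<^sub>m n - four_block_mat (g1 \<cdot>\<^sub>m (transpose_mat A1 * A1)) (g1 \<cdot>\<^sub>m (transpose_mat A1 * A2))
                (0\<^sub>m n2 n1) (0\<^sub>m n2 n2)))"

definition HB_iter :: "real mat \<Rightarrow> real \<Rightarrow> real \<Rightarrow> real mat" where
  "HB_iter A \<alpha> \<beta> =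
    (let n = dim_col A in
     four_block_mat (0\<^sub>m n n) (1\<^sub>m n) ((- \<beta>) \<cdot>\<^sub>m 1\<^sub>m n)
       ((1 + \<beta>) \<cdot>\<^sub>m 1\<^sub>m n - \<alpha> \<cdot>\<^sub>m (transpose_mat A * A)))"

text \<open>Optimal rates (the paper's minima, rendered as infima).\<close>
definition rho_BGD_opt :: "real mat \<Rightarrow> real mat \<Rightarrow> real" where
  "rho_BGD_opt A1 A2 =
     Inf {spectral_radius (cmat (BGD_iter A1 A2 g1 g2)) | g1 g2. g1 > 0 \<and> g2 > 0}"

definition rho_HB_opt :: "real mat \<Rightarrow> real" where
  "rho_HB_opt A =
     Inf {spectral_radius (cmat (HB_iter A \<alpha> \<beta>)) | \<alpha> \<beta>. \<alpha> > 0 \<and> \<beta> \<ge> 0}"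

end

theory Submission
  imports Defs
begin

text \<open>Write \<open>C = A2\<^sup>T A1\<close> and let \<open>\<sigma>\<close> be its largest singular value. With orthonormal blocks,
  \<open>A\<^sup>T A = [I, C\<^sup>T; C, I]\<close> has the eigenvalues \<open>1 \<plusminus> \<sigma>\<close>, so \<open>\<sigma> \<le> 1\<close>. Put
  \<open>q = (\<surd>\<kappa> - 1) / (\<surd>\<kappa> + 1)\<close> with \<open>\<kappa> = (1 + \<sigma>) / (1 - \<sigma>)\<close>; then \<open>\<sigma> (1 + q\<^sup>2) = 2 q\<close>.

  Heavy ball: an eigenvalue \<open>\<lambda>\<close> of \<open>A\<^sup>T A\<close> makes both roots of \<open>z\<^sup>2 - (1 + \<beta> - \<alpha> \<lambda>) z + \<beta>\<close>
  eigenvalues of \<open>N(\<alpha>, \<beta>)\<close>, and for \<open>\<lambda> = 1 \<plusminus> \<sigma>\<close> these four roots cannot all be smaller than \<open>q\<close>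
  in modulus. Hence \<open>q \<le> \<rho>\<^sub>H\<^sub>B\<^sup>*\<close>.

  Block gradient descent with \<open>\<gamma>\<^sub>1 = \<gamma>\<^sub>2 = \<gamma> = 1 + q\<^sup>2\<close>: an eigenvalue \<open>z\<close> of \<open>M(\<gamma>, \<gamma>)\<close> is
  \<open>0\<close>, or \<open>1 - \<gamma>\<close>, or makes \<open>(1 - \<gamma> - z)\<^sup>2 / (\<gamma>\<^sup>2 z)\<close> an eigenvalue \<open>\<mu> \<in> [0, \<sigma>\<^sup>2]\<close> of \<open>C\<^sup>T C\<close>.
  In the last case \<open>z\<close> solves a real quadratic whose discriminant is \<open>\<le> 0\<close> because
  \<open>\<gamma>\<^sup>2 \<sigma>\<^sup>2 = 4 (\<gamma> - 1)\<close>, so \<open>|z|\<^sup>2 = (\<gamma> - 1)\<^sup>2\<close>. Thus \<open>\<rho>\<^sub>B\<^sub>G\<^sub>D\<^sup>* \<le> \<gamma> - 1 = q\<^sup>2 \<le> (\<rho>\<^sub>H\<^sub>B\<^sup>*)\<^sup>2\<close>.\<close>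

section \<open>Real matrices as complex matrices\<close>

lemma cmat_carrier [simp]: "A \<in> carrier_mat nr nc \<Longrightarrow> cmat A \<in> carrier_mat nr nc"
  by (simp add: cmat_def)

lemma dim_cmat [simp]: "dim_row (cmat A) = dim_row A" "dim_col (cmat A) = dim_col A"
  by (simp_all add: cmat_def)

lemma index_cmat [simp]: "i < dim_row A \<Longrightarrow> j < dim_col A \<Longrightarrow> cmat A $$ (i, j) = of_real (A $$ (i, j))"
  by (simp add: cmat_def)

lemma cmat_mult: "A \<in> carrier_mat nr n \<Longrightarrow> B \<in> carrier_mat n nc \<Longrightarrow> cmat (A * B) = cmat A * cmat B"
  unfolding cmat_def by (rule of_real_hom.mat_hom_mult)

lemma cmat_transpose: "cmat (transpose_mat A) = transpose_mat (cmat A)"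
  by (simp add: cmat_def map_mat_transpose)

lemma cmat_one [simp]: "cmat (1\<^sub>m n) = 1\<^sub>m n"
  by (simp add: cmat_def of_real_hom.mat_hom_one)

lemma cmat_zero [simp]: "cmat (0\<^sub>m nr nc) = 0\<^sub>m nr nc"
  by (rule eq_matI) auto

lemma cmat_smult [simp]: "cmat (c \<cdot>\<^sub>m A) = of_real c \<cdot>\<^sub>m cmat A"
  by (rule eq_matI) auto

lemma cmat_minus: "A \<in> carrier_mat nr nc \<Longrightarrow> B \<in> carrier_mat nr nc \<Longrightarrow> cmat (A - B) = cmat A - cmat B"
  by (rule eq_matI) auto

lemma cmat_four_block_mat:
  "A \<in> carrier_mat nr1 nc1 \<Longrightarrow> B \<in> carrier_mat nr1 nc2 \<Longrightarrow> C \<in> carrier_mat nr2 nc1 \<Longrightarrow> D \<in> carrier_mat nr2 nc2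
   \<Longrightarrow> cmat (four_block_mat A B C D) = four_block_mat (cmat A) (cmat B) (cmat C) (cmat D)"
  unfolding cmat_def by (rule map_four_block_mat)

lemma cmat_mult_vec_conjugate:
  assumes "x \<in> carrier_vec (dim_col B)"
  shows "cmat B *\<^sub>v conjugate x = conjugate (cmat B *\<^sub>v x)"
  using assms by (intro eq_vecI) (auto simp: scalar_prod_def cnj_sum)

lemma smult_mat_mult_vec: "dim_vec v = dim_col A \<Longrightarrow> (k \<cdot>\<^sub>m A) *\<^sub>v v = k \<cdot>\<^sub>v (A *\<^sub>v v)"
  by (rule eq_vecI) (auto simp: scalar_prod_def sum_distrib_left ac_simps)

lemma zero_mat_mult_vec: "v \<in> carrier_vec nc \<Longrightarrow> 0\<^sub>m nr nc *\<^sub>v v = 0\<^sub>v nr"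
  by (rule eq_vecI) (auto simp: scalar_prod_def)

lemma smult_append_vec: "k \<cdot>\<^sub>v (a @\<^sub>v b) = (k \<cdot>\<^sub>v a) @\<^sub>v (k \<cdot>\<^sub>v b)"
  by (rule eq_vecI) (auto simp: nth_append)

lemma smult_vec_eq_zero_iff:
  fixes k :: "'a :: field"
  assumes "v \<in> carrier_vec n" "v \<noteq> 0\<^sub>v n"
  shows "k \<cdot>\<^sub>v v = 0\<^sub>v n \<longleftrightarrow> k = 0"
proof
  assume kv: "k \<cdot>\<^sub>v v = 0\<^sub>v n"
  show "k = 0"
  proof (rule ccontr)
    assume "k \<noteq> 0"
    then have "v = (1 / k) \<cdot>\<^sub>v (k \<cdot>\<^sub>v v)" by (simp add: smult_smult_assoc)
    also have "\<dots> = 0\<^sub>v n" unfolding kv by (intro eq_vecI) auto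
    finally show False using assms(2) by contradiction
  qed
qed (use assms(1) in \<open>auto intro: eq_vecI\<close>)

lemma append_vec_eq_zero_iff:
  assumes "a \<in> carrier_vec n1"
  shows "a @\<^sub>v b = 0\<^sub>v (n1 + n2) \<longleftrightarrow> a = 0\<^sub>v n1 \<and> b = 0\<^sub>v n2"
proof -
  have "0\<^sub>v (n1 + n2) = 0\<^sub>v n1 @\<^sub>v (0\<^sub>v n2 :: 'a :: zero vec)" by auto
  then show ?thesis using assms by simp
qed

section \<open>Spectra of Gram matrices\<close>

lemma eigenvalue_norm_le_spectral_radius:
  assumes "A \<in> carrier_mat n n" "0 < n" "eigenvector A v z"
  shows "cmod z \<le> spectral_radius A"
proof (rule spectral_radius_mem_max(2)[OF assms(1,2)])
  show "cmod z \<in> cmod ` spectrum A"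
    using assms(3) unfolding spectrum_def eigenvalue_def by blast
qed

lemma spectral_radius_le:
  assumes A: "A \<in> carrier_mat n n" "0 < n" and bound: "\<And>z v. eigenvector A v z \<Longrightarrow> cmod z \<le> r"
  shows "spectral_radius A \<le> r"
proof -
  obtain z where "z \<in> spectrum A" and "spectral_radius A = cmod z"
    using spectral_radius_mem_max(1)[OF A] by blast
  then show ?thesis using bound unfolding spectrum_def eigenvalue_def by auto
qed

lemma spectral_radius_nonneg:
  assumes "A \<in> carrier_mat n n" "0 < n"
  shows "0 \<le> spectral_radius A"
  using spectral_radius_mem_max(1)[OF assms] by auto

lemma gram_eigenvalue_real_nonneg:
  assumes B: "B \<in> carrier_mat p q" and eigen: "eigenvector (cmat (transpose_mat B * B)) x \<mu>"
  shows "Im \<mu> = 0 \<and> 0 \<le> Re \<mu>"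
proof -
  have x: "x \<in> carrier_vec q" "x \<noteq> 0\<^sub>v q" and ev: "cmat (transpose_mat B * B) *\<^sub>v x = \<mu> \<cdot>\<^sub>v x"
    using eigen B by (auto simp: eigenvector_def)
  define y where "y = cmat B *\<^sub>v x"
  have y: "y \<in> carrier_vec p" unfolding y_def using B x by (metis cmat_carrier mult_mat_vec_carrier)
  have "\<mu> * (x \<bullet>c x) = (\<mu> \<cdot>\<^sub>v x) \<bullet>c x"
    using x by (simp add: smult_scalar_prod_distrib[of x q "conjugate x" q])
  also have "\<dots> = (transpose_mat (cmat B) *\<^sub>v y) \<bullet> conjugate x"
    unfolding ev[symmetric] y_def using B x
    by (simp add: cmat_mult[of _ q p _ q] cmat_transpose assoc_mult_mat_vec[of _ q p _ q])
  also have "\<dots> = y \<bullet> (cmat B *\<^sub>v conjugate x)"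
    using B x y by (intro transpose_vec_mult_scalar) auto
  also have "\<dots> = y \<bullet>c y"
    using B x by (simp add: y_def cmat_mult_vec_conjugate)
  finally have "\<mu> * (x \<bullet>c x) = y \<bullet>c y" .
  moreover have "y \<bullet>c y \<ge> 0" by (rule conjugate_square_ge_0_vec)
  moreover have "x \<bullet>c x > 0" using x by simp
  ultimately have "Im (x \<bullet>c x) = 0" "Re (x \<bullet>c x) > 0"
    "Im (\<mu> * (x \<bullet>c x)) = 0" "Re (\<mu> * (x \<bullet>c x)) \<ge> 0"
    by (auto simp: less_eq_complex_def less_complex_def)
  then show ?thesis by (auto simp: zero_le_mult_iff)
qed

lemma gram_eigenvalue_bounds:
  assumes B: "B \<in> carrier_mat p q" and q: "0 < q" and ev: "eigenvector (cmat (transpose_mat B * B)) v \<mu>"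
  shows "Im \<mu> = 0 \<and> 0 \<le> Re \<mu> \<and> Re \<mu> \<le> spectral_radius (cmat (transpose_mat B * B))"
proof -
  have "cmat (transpose_mat B * B) \<in> carrier_mat q q" using B by simp
  from eigenvalue_norm_le_spectral_radius[OF this q ev]
  have "Re \<mu> \<le> spectral_radius (cmat (transpose_mat B * B))" using complex_Re_le_cmod order_trans by blast
  with gram_eigenvalue_real_nonneg[OF B ev] show ?thesis by simp
qed

lemma gram_spectral_radius_eigenvector:
  assumes B: "B \<in> carrier_mat p q" and q: "0 < q"
  obtains u where "eigenvector (cmat (transpose_mat B * B)) u (of_real (spectral_radius (cmat (transpose_mat B * B))))"
proof -
  let ?G = "cmat (transpose_mat B * B)"
  have G: "?G \<in> carrier_mat q q" using B by simp
  obtain \<mu> where "\<mu> \<in> spectrum ?G" and r: "spectral_radius ?G = cmod \<mu>"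
    using spectral_radius_mem_max(1)[OF G q] by blast
  then obtain u where u: "eigenvector ?G u \<mu>" by (auto simp: spectrum_def eigenvalue_def)
  with gram_eigenvalue_real_nonneg[OF B] have "\<mu> = of_real (spectral_radius ?G)"
    by (auto simp: r complex_eq_iff cmod_def)
  with u show thesis by (intro that) simp
qed

section \<open>Real quadratics\<close>

lemma norm_sq_root_of_real_quadratic:
  fixes z :: complex and b c :: real
  assumes root: "z\<^sup>2 - of_real b * z + of_real c = 0" and disc: "b\<^sup>2 \<le> 4 * c"
  shows "(cmod z)\<^sup>2 = c"
proof -
  obtain x y where z: "z = Complex x y" by (cases z)
  have re: "x\<^sup>2 - y\<^sup>2 - b * x + c = 0" and im: "(2 * x - b) * y = 0"
    using arg_cong[OF root, of Re] arg_cong[OF root, of Im] z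
    by (simp_all add: power2_eq_square algebra_simps)
  have "b = 2 * x"
  proof (cases "y = 0")
    case True
    then have "(2 * x - b)\<^sup>2 = b\<^sup>2 - 4 * c" using re by (simp add: power2_eq_square algebra_simps)
    then show ?thesis using disc by (smt (verit) zero_le_power2 power_eq_0_iff)
  qed (use im in simp)
  then have "c = x\<^sup>2 + y\<^sup>2" using re by (simp add: power2_eq_square algebra_simps)
  then show ?thesis using z by (simp add: cmod_def)
qed

text \<open>The root of \<open>z\<^sup>2 - b z + c\<close> of largest modulus.\<close>
definition dominant_root :: "real \<Rightarrow> real \<Rightarrow> complex" where
  "dominant_root b c =
    (if b\<^sup>2 < 4 * c then Complex (b / 2) (sqrt (4 * c - b\<^sup>2) / 2)
     else if 0 \<le> b then of_real ((b + sqrt (b\<^sup>2 - 4 * c)) / 2)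
     else of_real ((b - sqrt (b\<^sup>2 - 4 * c)) / 2))"

lemma dominant_root_is_root: "(dominant_root b c)\<^sup>2 - of_real b * dominant_root b c + of_real c = 0"
proof (cases "b\<^sup>2 < 4 * c")
  case True
  then have "(sqrt (4 * c - b\<^sup>2))\<^sup>2 = 4 * c - b\<^sup>2" by simp
  with True show ?thesis
    by (simp add: dominant_root_def complex_eq_iff power2_eq_square field_simps)
next
  case False
  define r where "r = (if 0 \<le> b then (b + sqrt (b\<^sup>2 - 4 * c)) / 2 else (b - sqrt (b\<^sup>2 - 4 * c)) / 2)"
  have "(sqrt (b\<^sup>2 - 4 * c))\<^sup>2 = b\<^sup>2 - 4 * c" using False by simp
  then have "r\<^sup>2 - b * r + c = 0"
    by (simp add: r_def power2_eq_square field_simps)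
  then have "(of_real r :: complex)\<^sup>2 - of_real b * of_real r + of_real c = 0"
    by (metis of_real_diff of_real_add of_real_mult of_real_power of_real_0)
  moreover have "dominant_root b c = of_real r" using False by (simp add: dominant_root_def r_def)
  ultimately show ?thesis by simp
qed

lemma norm_dominant_root_less:
  assumes c: "0 \<le> c" and q: "0 < q" and less: "cmod (dominant_root b c) < q"
  shows "c < q\<^sup>2" and "\<bar>b\<bar> * q < q\<^sup>2 + c"
proof -
  have "c < q\<^sup>2 \<and> \<bar>b\<bar> * q < q\<^sup>2 + c"
  proof (cases "b\<^sup>2 < 4 * c")
    case True
    have "(cmod (dominant_root b c))\<^sup>2 = c"
      by (rule norm_sq_root_of_real_quadratic[OF dominant_root_is_root]) (use True in simp)
    moreover have "(cmod (dominant_root b c))\<^sup>2 < q\<^sup>2" using less by (simp add: power_strict_mono)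
    ultimately have cq: "c < q\<^sup>2" by simp
    have "0 \<le> (q - sqrt c)\<^sup>2" by simp
    then have am_gm: "2 * sqrt c * q \<le> q\<^sup>2 + c" using c by (simp add: power2_diff algebra_simps)
    have "sqrt (b\<^sup>2) < sqrt (4 * c)" using True by (rule real_sqrt_less_mono)
    then have "\<bar>b\<bar> * q < 2 * sqrt c * q" using q by (simp add: real_sqrt_mult)
    then show ?thesis using cq am_gm by linarith
  next
    case False
    define d where "d = sqrt (b\<^sup>2 - 4 * c)"
    have d: "d\<^sup>2 = b\<^sup>2 - 4 * c" "0 \<le> d" using False by (auto simp: d_def)
    have "d\<^sup>2 \<le> \<bar>b\<bar>\<^sup>2" using d(1) c by simp
    then have "d \<le> \<bar>b\<bar>" by (rule power2_le_imp_le) simp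
    \<comment> \<open>the moduli of the two real roots\<close>
    define z1 z2 where "z1 = (\<bar>b\<bar> + d) / 2" and "z2 = (\<bar>b\<bar> - d) / 2"
    have "dominant_root b c = of_real (if 0 \<le> b then (b + d) / 2 else (b - d) / 2)"
      using False by (simp add: dominant_root_def d_def)
    then have "cmod (dominant_root b c) = \<bar>if 0 \<le> b then (b + d) / 2 else (b - d) / 2\<bar>"
      by (simp only: norm_of_real)
    also have "\<dots> = z1" using d(2) by (auto simp: z1_def)
    finally have z1q: "z1 < q" using less by simp
    have z2: "0 \<le> z2" "z2 \<le> z1" using \<open>d \<le> \<bar>b\<bar>\<close> d by (auto simp: z1_def z2_def)
    have prod: "z1 * z2 = c" and sum: "z1 + z2 = \<bar>b\<bar>"
      using d by (simp_all add: z1_def z2_def power2_eq_square field_simps)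
    have "z1 * z2 < q * q" using z1q z2 by (intro mult_strict_mono') auto
    moreover have "0 < (q - z1) * (q - z2)" using z1q z2 by simp
    ultimately show ?thesis unfolding sum[symmetric] prod[symmetric]
      by (simp add: power2_eq_square algebra_simps)
  qed
  then show "c < q\<^sup>2" and "\<bar>b\<bar> * q < q\<^sup>2 + c" by auto
qed

text \<open>The hypothesis \<open>cond\<close> says \<open>q = (\<surd>\<kappa> - 1) / (\<surd>\<kappa> + 1)\<close> for \<open>\<kappa> = L / \<mu>\<close>.\<close>
lemma heavy_ball_dominant_root_ge:
  assumes q: "0 < q" "q \<le> 1" and \<mu>: "0 \<le> \<mu>" and L: "0 < L"
    and cond: "\<mu> * (1 + q)\<^sup>2 = L * (1 - q)\<^sup>2" and \<alpha>: "0 < \<alpha>" and \<beta>: "0 \<le> \<beta>"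
  shows "q \<le> cmod (dominant_root (1 + \<beta> - \<alpha> * \<mu>) \<beta>) \<or> q \<le> cmod (dominant_root (1 + \<beta> - \<alpha> * L) \<beta>)"
proof (rule ccontr)
  assume "\<not> ?thesis"
  then have less: "cmod (dominant_root (1 + \<beta> - \<alpha> * \<mu>) \<beta>) < q" "cmod (dominant_root (1 + \<beta> - \<alpha> * L) \<beta>) < q"
    by auto
  note small = less[THEN norm_dominant_root_less(2)[OF \<beta> q(1)]]
  have \<beta>q: "\<beta> < q\<^sup>2" using norm_dominant_root_less(1)[OF \<beta> q(1) less(1)] .
  have "(1 + \<beta> - \<alpha> * \<mu>) * q < q\<^sup>2 + \<beta>" using small(1) q by (smt (verit) abs_ge_self mult_right_mono)
  then have e\<mu>: "(1 - q) * (q - \<beta>) < \<alpha> * \<mu> * q" by (simp add: power2_eq_square algebra_simps)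
  have "(\<alpha> * L - 1 - \<beta>) * q < q\<^sup>2 + \<beta>" using small(2) q by (smt (verit) abs_ge_minus_self mult_right_mono)
  then have eL: "\<alpha> * L * q < (1 + q) * (q + \<beta>)" by (simp add: power2_eq_square algebra_simps)
  have "(1 - q) * (q * (1 - q)) \<le> (1 - q) * (q - \<beta>)"
    using q \<beta>q by (intro mult_left_mono) (auto simp: power2_eq_square algebra_simps)
  from mult_left_mono[OF this, of L] L
  have "L * (1 - q)\<^sup>2 * q \<le> L * ((1 - q) * (q - \<beta>))" by (simp add: power2_eq_square algebra_simps)
  also have "\<dots> < L * (\<alpha> * \<mu> * q)" using e\<mu> L by simp
  also have "\<dots> = \<mu> * (\<alpha> * L * q)" by simp
  also have "\<dots> \<le> \<mu> * ((1 + q) * (q + \<beta>))" using eL \<mu> by (simp add: mult_left_mono)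
  also have "(1 + q) * (q + \<beta>) \<le> (1 + q) * (q * (1 + q))"
    using q \<beta>q by (intro mult_left_mono) (auto simp: power2_eq_square algebra_simps)
  from mult_left_mono[OF this \<mu>]
  have "\<mu> * ((1 + q) * (q + \<beta>)) \<le> \<mu> * (1 + q)\<^sup>2 * q" by (simp add: power2_eq_square algebra_simps)
  finally show False using cond by simp
qed

text \<open>The rate \<open>(\<surd>\<kappa> - 1) / (\<surd>\<kappa> + 1)\<close> for \<open>\<kappa> = (1 + s) / (1 - s)\<close>.\<close>
definition hb_rate :: "real \<Rightarrow> real" where
  "hb_rate s = (sqrt (1 + s) - sqrt (1 - s)) / (sqrt (1 + s) + sqrt (1 - s))"

context
  fixes s :: real
  assumes s: "0 \<le> s" "s \<le> 1"
begin

lemma hb_rate_nonneg: "0 \<le> hb_rate s"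
  using s by (simp add: hb_rate_def)

lemma hb_rate_le_one: "hb_rate s \<le> 1"
  using s by (simp add: hb_rate_def divide_le_eq_1 add_pos_nonneg)

lemma hb_rate_pos: "0 < s \<Longrightarrow> 0 < hb_rate s"
  using s by (simp add: hb_rate_def divide_pos_pos add_pos_nonneg)

lemma hb_rate_equation: "s * (1 + (hb_rate s)\<^sup>2) = 2 * hb_rate s"
proof -
  define a b q where "a = sqrt (1 + s)" and "b = sqrt (1 - s)" and "q = hb_rate s"
  have ab: "a\<^sup>2 = 1 + s" "b\<^sup>2 = 1 - s" "0 < a + b"
    using s by (auto simp: a_def b_def add_pos_nonneg)
  have qab: "q * (a + b) = a - b"
    using ab(3) by (simp add: q_def hb_rate_def a_def[symmetric] b_def[symmetric])
  have "(a + b)\<^sup>2 * (s * (1 + q\<^sup>2)) = s * ((a + b)\<^sup>2 + (q * (a + b))\<^sup>2)"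
    by (simp add: power2_eq_square algebra_simps)
  also have "\<dots> = 2 * (q * (a + b)) * (a + b)"
    unfolding qab using ab by (simp add: power2_eq_square algebra_simps)
  also have "\<dots> = (a + b)\<^sup>2 * (2 * q)"
    by (simp add: power2_eq_square)
  finally show ?thesis using ab(3) by (simp add: q_def)
qed

lemma hb_rate_condition_number: "(1 - s) * (1 + hb_rate s)\<^sup>2 = (1 + s) * (1 - hb_rate s)\<^sup>2"
  using hb_rate_equation by (simp add: power2_eq_square algebra_simps)

end

section \<open>Eigenvalues of the iteration matrices\<close>

lemma block_gram_eigenvector:
  fixes C CT :: "complex mat"
  assumes C: "C \<in> carrier_mat n2 n1" and CT: "CT \<in> carrier_mat n1 n2"
    and u: "eigenvector (CT * C) u (of_real (s\<^sup>2))" and s: "0 < s" and \<sigma>: "\<sigma>\<^sup>2 = 1"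
  shows "eigenvector (four_block_mat (1\<^sub>m n1) CT C (1\<^sub>m n2))
           (u @\<^sub>v (of_real (\<sigma> / s) \<cdot>\<^sub>v (C *\<^sub>v u))) (of_real (1 + \<sigma> * s))"
proof -
  define w where "w = of_real (\<sigma> / s) \<cdot>\<^sub>v (C *\<^sub>v u)"
  have uc: "u \<in> carrier_vec n1" "u \<noteq> 0\<^sub>v n1" and Ku: "CT *\<^sub>v (C *\<^sub>v u) = of_real (s\<^sup>2) \<cdot>\<^sub>v u"
    using u C CT by (auto simp: eigenvector_def assoc_mult_mat_vec[of _ n1 n2 _ n1])
  have wc: "w \<in> carrier_vec n2" using C uc by (simp add: w_def)
  have top: "u + CT *\<^sub>v w = of_real (1 + \<sigma> * s) \<cdot>\<^sub>v u"
    using C CT uc s \<sigma>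
    by (intro eq_vecI) (auto simp: w_def mult_mat_vec[of _ n1 n2] Ku power2_eq_square field_simps)
  have "C *\<^sub>v u + w = of_real (1 + \<sigma> / s) \<cdot>\<^sub>v (C *\<^sub>v u)"
    using C uc by (intro eq_vecI) (auto simp: w_def algebra_simps)
  also have "1 + \<sigma> / s = (1 + \<sigma> * s) * (\<sigma> / s)"
    using s \<sigma> by (simp add: power2_eq_square field_simps)
  finally have bottom: "C *\<^sub>v u + w = of_real (1 + \<sigma> * s) \<cdot>\<^sub>v w"
    by (simp add: w_def smult_smult_assoc)
  have "four_block_mat (1\<^sub>m n1) CT C (1\<^sub>m n2) *\<^sub>v (u @\<^sub>v w) = (u + CT *\<^sub>v w) @\<^sub>v (C *\<^sub>v u + w)"
    using C CT uc wc by (subst four_block_mat_mult_vec[of _ n1 n1 _ n2]) auto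
  also have "\<dots> = of_real (1 + \<sigma> * s) \<cdot>\<^sub>v (u @\<^sub>v w)"
    unfolding top bottom smult_append_vec ..
  finally show ?thesis
    using uc wc append_vec_eq_zero_iff[OF uc(1), of w n2] unfolding eigenvector_def w_def[symmetric] by auto
qed

lemma heavy_ball_eigenvector:
  fixes G :: "complex mat"
  assumes G: "G \<in> carrier_mat n n" and v: "eigenvector G v (of_real l)"
    and z: "z\<^sup>2 - of_real (1 + \<beta> - \<alpha> * l) * z + of_real \<beta> = 0"
  shows "eigenvector (four_block_mat (0\<^sub>m n n) (1\<^sub>m n) (of_real (- \<beta>) \<cdot>\<^sub>m 1\<^sub>m n)
           (of_real (1 + \<beta>) \<cdot>\<^sub>m 1\<^sub>m n - of_real \<alpha> \<cdot>\<^sub>m G)) (v @\<^sub>v (z \<cdot>\<^sub>v v)) z"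
    (is "eigenvector ?N ?w z")
proof -
  have vc: "v \<in> carrier_vec n" "v \<noteq> 0\<^sub>v n" and Gv: "G *\<^sub>v v = of_real l \<cdot>\<^sub>v v"
    using v G by (auto simp: eigenvector_def)
  have zz: "z * z = of_real (1 + \<beta> - \<alpha> * l) * z - of_real \<beta>"
    using z by (simp add: power2_eq_square algebra_simps)
  have bottom: "(of_real (- \<beta>) \<cdot>\<^sub>m 1\<^sub>m n) *\<^sub>v v + (of_real (1 + \<beta>) \<cdot>\<^sub>m 1\<^sub>m n - of_real \<alpha> \<cdot>\<^sub>m G) *\<^sub>v (z \<cdot>\<^sub>v v)
      = z \<cdot>\<^sub>v (z \<cdot>\<^sub>v v)"
  proof -
    have "(of_real (1 + \<beta>) \<cdot>\<^sub>m 1\<^sub>m n - of_real \<alpha> \<cdot>\<^sub>m G) *\<^sub>v (z \<cdot>\<^sub>v v)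
        = (of_real (1 + \<beta>) * z) \<cdot>\<^sub>v v - (of_real \<alpha> * z * of_real l) \<cdot>\<^sub>v v"
      using G vc by (simp add: minus_mult_distrib_mat_vec[of _ n n] smult_mat_mult_vec mult_mat_vec[of _ n n]
          Gv smult_smult_assoc ac_simps)
    moreover have "z * (z * v $ i) = (of_real (1 + \<beta> - \<alpha> * l) * z - of_real \<beta>) * v $ i" for i
      using zz by (simp flip: mult.assoc)
    ultimately show ?thesis
      using G vc by (intro eq_vecI) (auto simp: smult_mat_mult_vec algebra_simps)
  qed
  have "?N *\<^sub>v ?w = (0\<^sub>m n n *\<^sub>v v + 1\<^sub>m n *\<^sub>v (z \<cdot>\<^sub>v v)) @\<^sub>v (z \<cdot>\<^sub>v (z \<cdot>\<^sub>v v))"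
    unfolding bottom[symmetric] using G vc by (intro four_block_mat_mult_vec) auto
  also have "0\<^sub>m n n *\<^sub>v v + 1\<^sub>m n *\<^sub>v (z \<cdot>\<^sub>v v) = z \<cdot>\<^sub>v v"
    using vc by (simp add: zero_mat_mult_vec)
  finally have "?N *\<^sub>v ?w = z \<cdot>\<^sub>v ?w" by (simp only: smult_append_vec)
  moreover have "?w \<noteq> 0\<^sub>v (n + n)" using append_vec_eq_zero_iff[OF vc(1)] vc(2) by blast
  ultimately show ?thesis unfolding eigenvector_def using G vc by simp
qed

lemma norm_root_bgd_characteristic:
  fixes z :: complex
  assumes eq: "(1 - of_real g - z)\<^sup>2 = of_real g ^ 2 * z * of_real m"
    and m: "0 \<le> m" "m \<le> S" and g: "1 \<le> g" "g\<^sup>2 * S \<le> 4 * (g - 1)"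
  shows "cmod z = g - 1"
proof -
  from eq have root: "z\<^sup>2 - of_real (2 * (1 - g) + g\<^sup>2 * m) * z + of_real ((1 - g)\<^sup>2) = 0"
    by (simp add: power2_eq_square algebra_simps)
  have "g\<^sup>2 * m \<le> g\<^sup>2 * S" by (rule mult_left_mono[OF m(2)]) simp
  moreover have "0 \<le> g\<^sup>2 * m" using m by simp
  ultimately have "\<bar>2 * (1 - g) + g\<^sup>2 * m\<bar> \<le> 2 * (g - 1)" using g(2) by (simp add: abs_le_iff algebra_simps)
  then have "\<bar>2 * (1 - g) + g\<^sup>2 * m\<bar>\<^sup>2 \<le> (2 * (g - 1))\<^sup>2" by (rule power_mono) simp
  then have "(2 * (1 - g) + g\<^sup>2 * m)\<^sup>2 \<le> 4 * (1 - g)\<^sup>2" by (simp add: power2_eq_square algebra_simps)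
  with root have "(cmod z)\<^sup>2 = (1 - g)\<^sup>2" by (rule norm_sq_root_of_real_quadratic)
  then show ?thesis using g(1) by (simp add: power2_eq_iff_nonneg power2_commute[of 1 g])
qed

lemma bgd_eigen_equations:
  fixes C CT :: "complex mat"
  assumes C: "C \<in> carrier_mat n2 n1" and CT: "CT \<in> carrier_mat n1 n2"
    and x: "x1 \<in> carrier_vec n1" "x2 \<in> carrier_vec n2"
    and ev: "(four_block_mat (1\<^sub>m n1) (0\<^sub>m n1 n2) (of_real (- g) \<cdot>\<^sub>m C) (of_real (1 - g) \<cdot>\<^sub>m 1\<^sub>m n2)
        * four_block_mat (of_real (1 - g) \<cdot>\<^sub>m 1\<^sub>m n1) (of_real (- g) \<cdot>\<^sub>m CT) (0\<^sub>m n2 n1) (1\<^sub>m n2))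
        *\<^sub>v (x1 @\<^sub>v x2) = z \<cdot>\<^sub>v (x1 @\<^sub>v x2)" (is "(?L * ?R) *\<^sub>v _ = _")
  shows "of_real g \<cdot>\<^sub>v (CT *\<^sub>v x2) = (1 - of_real g - z) \<cdot>\<^sub>v x1"
    and "(of_real g * z) \<cdot>\<^sub>v (C *\<^sub>v x1) = (1 - of_real g - z) \<cdot>\<^sub>v x2"
proof -
  define y1 where "y1 = of_real (1 - g) \<cdot>\<^sub>v x1 + of_real (- g) \<cdot>\<^sub>v (CT *\<^sub>v x2)"
  have y1: "y1 \<in> carrier_vec n1" using CT x by (simp add: y1_def)
  have "(z \<cdot>\<^sub>v x1) @\<^sub>v (z \<cdot>\<^sub>v x2) = (?L * ?R) *\<^sub>v (x1 @\<^sub>v x2)"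
    unfolding ev smult_append_vec ..
  also have "\<dots> = ?L *\<^sub>v (?R *\<^sub>v (x1 @\<^sub>v x2))"
    using C CT x by (intro assoc_mult_mat_vec[of _ "n1 + n2" "n1 + n2" _ "n1 + n2"]) auto
  also have "?R *\<^sub>v (x1 @\<^sub>v x2) = y1 @\<^sub>v x2"
    using CT x by (subst four_block_mat_mult_vec[of _ n1 n1 _ n2])
      (auto simp: smult_mat_mult_vec zero_mat_mult_vec y1_def)
  also have "?L *\<^sub>v (y1 @\<^sub>v x2) = y1 @\<^sub>v (of_real (- g) \<cdot>\<^sub>v (C *\<^sub>v y1) + of_real (1 - g) \<cdot>\<^sub>v x2)"
    using C x y1 by (subst four_block_mat_mult_vec[of _ n1 n1 _ n2])
      (auto simp: smult_mat_mult_vec zero_mat_mult_vec)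
  finally have "y1 @\<^sub>v (of_real (- g) \<cdot>\<^sub>v (C *\<^sub>v y1) + of_real (1 - g) \<cdot>\<^sub>v x2) = (z \<cdot>\<^sub>v x1) @\<^sub>v (z \<cdot>\<^sub>v x2)" ..
  then have y1z: "y1 = z \<cdot>\<^sub>v x1" and x2z: "of_real (- g) \<cdot>\<^sub>v (C *\<^sub>v y1) + of_real (1 - g) \<cdot>\<^sub>v x2 = z \<cdot>\<^sub>v x2"
    using append_vec_eq[OF y1, of "z \<cdot>\<^sub>v x1"] x by auto
  show "of_real g \<cdot>\<^sub>v (CT *\<^sub>v x2) = (1 - of_real g - z) \<cdot>\<^sub>v x1"
  proof (rule eq_vecI)
    fix i assume "i < dim_vec ((1 - of_real g - z) \<cdot>\<^sub>v x1)"
    then have i: "i < n1" using x by simp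
    have "(1 - of_real g) * x1 $ i - of_real g * (CT *\<^sub>v x2) $ i = z * x1 $ i"
      using arg_cong[OF y1z, of "\<lambda>v. v $ i"] i CT x by (simp add: y1_def)
    then show "(of_real g \<cdot>\<^sub>v (CT *\<^sub>v x2)) $ i = ((1 - of_real g - z) \<cdot>\<^sub>v x1) $ i"
      using i CT x by (simp add: algebra_simps)
  qed (use CT x in simp)
  have Cy1: "C *\<^sub>v y1 = z \<cdot>\<^sub>v (C *\<^sub>v x1)" using C x by (simp add: y1z mult_mat_vec[of _ n2 n1])
  show "(of_real g * z) \<cdot>\<^sub>v (C *\<^sub>v x1) = (1 - of_real g - z) \<cdot>\<^sub>v x2"
  proof (rule eq_vecI)
    fix i assume "i < dim_vec ((1 - of_real g - z) \<cdot>\<^sub>v x2)"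
    then have i: "i < n2" using x by simp
    have "- of_real g * (z * (C *\<^sub>v x1) $ i) + (1 - of_real g) * x2 $ i = z * x2 $ i"
      using arg_cong[OF x2z, of "\<lambda>v. v $ i"] i C x by (simp add: Cy1)
    then show "((of_real g * z) \<cdot>\<^sub>v (C *\<^sub>v x1)) $ i = ((1 - of_real g - z) \<cdot>\<^sub>v x2) $ i"
      using i C x by (simp add: algebra_simps)
  qed (use C x in simp)
qed

lemma bgd_eigen_equations_imp_gram_eigen:
  fixes C CT :: "complex mat"
  assumes C: "C \<in> carrier_mat n2 n1" and CT: "CT \<in> carrier_mat n1 n2"
    and x: "x1 \<in> carrier_vec n1" "x2 \<in> carrier_vec n2"
    and E1: "of_real g \<cdot>\<^sub>v (CT *\<^sub>v x2) = (1 - of_real g - z) \<cdot>\<^sub>v x1"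
    and E2: "(of_real g * z) \<cdot>\<^sub>v (C *\<^sub>v x1) = (1 - of_real g - z) \<cdot>\<^sub>v x2"
    and nz: "g \<noteq> 0" "z \<noteq> 0"
  shows "(CT * C) *\<^sub>v x1 = ((1 - of_real g - z)\<^sup>2 / (of_real g ^ 2 * z)) \<cdot>\<^sub>v x1"
proof -
  let ?c = "1 - of_real g - z"
  have "(of_real g ^ 2 * z) \<cdot>\<^sub>v (CT *\<^sub>v (C *\<^sub>v x1)) = of_real g \<cdot>\<^sub>v (CT *\<^sub>v ((of_real g * z) \<cdot>\<^sub>v (C *\<^sub>v x1)))"
    using C CT x by (simp add: mult_mat_vec[of _ n1 n2] smult_smult_assoc power2_eq_square ac_simps)
  also have "\<dots> = ?c \<cdot>\<^sub>v (of_real g \<cdot>\<^sub>v (CT *\<^sub>v x2))"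
    unfolding E2 using CT x by (simp add: mult_mat_vec[of _ n1 n2] smult_smult_assoc ac_simps)
  also have "\<dots> = (?c\<^sup>2) \<cdot>\<^sub>v x1"
    unfolding E1 by (simp add: smult_smult_assoc power2_eq_square)
  finally have key: "(of_real g ^ 2 * z) \<cdot>\<^sub>v (CT *\<^sub>v (C *\<^sub>v x1)) = ?c\<^sup>2 \<cdot>\<^sub>v x1" .
  have "(CT * C) *\<^sub>v x1 = (1 / (of_real g ^ 2 * z)) \<cdot>\<^sub>v ((of_real g ^ 2 * z) \<cdot>\<^sub>v (CT *\<^sub>v (C *\<^sub>v x1)))"
    using C CT x nz by (simp add: assoc_mult_mat_vec[of _ n1 n2 _ n1] smult_smult_assoc)
  also have "\<dots> = (?c\<^sup>2 / (of_real g ^ 2 * z)) \<cdot>\<^sub>v x1"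
    unfolding key by (simp add: smult_smult_assoc)
  finally show ?thesis .
qed

lemma bgd_eigenvalue_norm_le:
  fixes C CT :: "complex mat"
  assumes C: "C \<in> carrier_mat n2 n1" and CT: "CT \<in> carrier_mat n1 n2"
    and ev: "eigenvector
        (four_block_mat (1\<^sub>m n1) (0\<^sub>m n1 n2) (of_real (- g) \<cdot>\<^sub>m C) (of_real (1 - g) \<cdot>\<^sub>m 1\<^sub>m n2)
        * four_block_mat (of_real (1 - g) \<cdot>\<^sub>m 1\<^sub>m n1) (of_real (- g) \<cdot>\<^sub>m CT) (0\<^sub>m n2 n1) (1\<^sub>m n2)) x z"
    and g: "1 \<le> g" "g\<^sup>2 * S \<le> 4 * (g - 1)"
    and gram: "\<And>v \<mu>. eigenvector (CT * C) v \<mu> \<Longrightarrow> Im \<mu> = 0 \<and> 0 \<le> Re \<mu> \<and> Re \<mu> \<le> S"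
  shows "cmod z \<le> g - 1"
proof -
  define x1 x2 where "x1 = vec_first x n1" and "x2 = vec_last x n2"
  have x: "x \<in> carrier_vec (n1 + n2)" "x \<noteq> 0\<^sub>v (n1 + n2)"
    using ev by (auto simp: eigenvector_def)
  have xs: "x = x1 @\<^sub>v x2" and x12: "x1 \<in> carrier_vec n1" "x2 \<in> carrier_vec n2"
    using x by (auto simp: x1_def x2_def)
  note E = bgd_eigen_equations[OF C CT x12, of g z]
  have E1: "of_real g \<cdot>\<^sub>v (CT *\<^sub>v x2) = (1 - of_real g - z) \<cdot>\<^sub>v x1"
    and E2: "(of_real g * z) \<cdot>\<^sub>v (C *\<^sub>v x1) = (1 - of_real g - z) \<cdot>\<^sub>v x2"
    using E ev unfolding eigenvector_def xs by simp_all
  consider "x1 = 0\<^sub>v n1" | "z = 0" | "x1 \<noteq> 0\<^sub>v n1" "z \<noteq> 0" by blast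
  then show ?thesis
  proof cases
    case 1
    then have x2: "x2 \<noteq> 0\<^sub>v n2" using x xs append_vec_eq_zero_iff[OF x12(1)] by blast
    have "(1 - of_real g - z) \<cdot>\<^sub>v x2 = 0\<^sub>v n2"
      unfolding E2[symmetric] 1 using C by (intro eq_vecI) auto
    then have "1 - of_real g - z = 0" using smult_vec_eq_zero_iff[OF x12(2) x2] by blast
    then have "z = of_real (1 - g)" by simp
    then show ?thesis using g(1) by (simp only: norm_of_real)
  next
    case 2
    then show ?thesis using g(1) by simp
  next
    case 3
    define \<mu> where "\<mu> = (1 - of_real g - z)\<^sup>2 / (of_real g ^ 2 * z)"
    have "g \<noteq> 0" using g(1) by simp
    from bgd_eigen_equations_imp_gram_eigen[OF C CT x12 E1 E2 this 3(2)]
    have "eigenvector (CT * C) x1 \<mu>"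
      using 3(1) C CT x12 by (simp add: eigenvector_def \<mu>_def)
    then have "Im \<mu> = 0" and m: "0 \<le> Re \<mu>" "Re \<mu> \<le> S" using gram by auto
    then have "\<mu> = of_real (Re \<mu>)" by (simp add: complex_eq_iff)
    moreover have "(1 - of_real g - z)\<^sup>2 = of_real g ^ 2 * z * \<mu>"
      using 3 \<open>g \<noteq> 0\<close> by (simp add: \<mu>_def)
    ultimately have "(1 - of_real g - z)\<^sup>2 = of_real g ^ 2 * z * of_real (Re \<mu>)" by simp
    then show ?thesis using norm_root_bgd_characteristic m g by simp
  qed
qed

section \<open>Orthonormal column blocks\<close>

lemma hcat_carrier: "A1 \<in> carrier_mat m n1 \<Longrightarrow> A2 \<in> carrier_mat m n2 \<Longrightarrow> hcat A1 A2 \<in> carrier_mat m (n1 + n2)"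
  unfolding hcat_def by (metis add_0_right carrier_matD(2) four_block_carrier_mat zero_carrier_mat)

lemma gram_hcat:
  assumes A1: "A1 \<in> carrier_mat m n1" and A2: "A2 \<in> carrier_mat m n2"
  shows "transpose_mat (hcat A1 A2) * hcat A1 A2 =
    four_block_mat (transpose_mat A1 * A1) (transpose_mat A1 * A2) (transpose_mat A2 * A1) (transpose_mat A2 * A2)"
proof -
  have h: "hcat A1 A2 = four_block_mat A1 A2 (0\<^sub>m 0 n1) (0\<^sub>m 0 n2)" using A1 A2 by (simp add: hcat_def)
  have t: "transpose_mat (hcat A1 A2) = four_block_mat (transpose_mat A1) (0\<^sub>m n1 0) (transpose_mat A2) (0\<^sub>m n2 0)"
    unfolding h by (subst transpose_four_block_mat[OF A1 A2]) auto
  have "transpose_mat (hcat A1 A2) * hcat A1 A2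
      = four_block_mat (transpose_mat A1) (0\<^sub>m n1 0) (transpose_mat A2) (0\<^sub>m n2 0) * four_block_mat A1 A2 (0\<^sub>m 0 n1) (0\<^sub>m 0 n2)"
    unfolding t by (subst h) (rule refl)
  also have "\<dots> = four_block_mat (transpose_mat A1 * A1) (transpose_mat A1 * A2) (transpose_mat A2 * A1) (transpose_mat A2 * A2)"
    using A1 A2 by (subst mult_four_block_mat[of _ n1 m _ 0 _ n2]) auto
  finally show ?thesis .
qed

lemma one_minus_lower_block_mat:
  fixes C :: "'a :: ring_1 mat"
  assumes "C \<in> carrier_mat n2 n1"
  shows "1\<^sub>m (n1 + n2) - four_block_mat (0\<^sub>m n1 n1) (0\<^sub>m n1 n2) (g \<cdot>\<^sub>m C) (g \<cdot>\<^sub>m 1\<^sub>m n2)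
    = four_block_mat (1\<^sub>m n1) (0\<^sub>m n1 n2) ((- g) \<cdot>\<^sub>m C) ((1 - g) \<cdot>\<^sub>m 1\<^sub>m n2)"
  using assms by (intro eq_matI) auto

lemma one_minus_upper_block_mat:
  fixes CT :: "'a :: ring_1 mat"
  assumes "CT \<in> carrier_mat n1 n2"
  shows "1\<^sub>m (n1 + n2) - four_block_mat (g \<cdot>\<^sub>m 1\<^sub>m n1) (g \<cdot>\<^sub>m CT) (0\<^sub>m n2 n1) (0\<^sub>m n2 n2)
    = four_block_mat ((1 - g) \<cdot>\<^sub>m 1\<^sub>m n1) ((- g) \<cdot>\<^sub>m CT) (0\<^sub>m n2 n1) (1\<^sub>m n2)"
  using assms by (intro eq_matI) auto

lemma BGD_iter_orthonormal:
  assumes A1: "A1 \<in> carrier_mat m n1" and A2: "A2 \<in> carrier_mat m n2"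
    and o1: "transpose_mat A1 * A1 = 1\<^sub>m n1" and o2: "transpose_mat A2 * A2 = 1\<^sub>m n2"
  shows "BGD_iter A1 A2 g g =
    four_block_mat (1\<^sub>m n1) (0\<^sub>m n1 n2) ((- g) \<cdot>\<^sub>m (transpose_mat A2 * A1)) ((1 - g) \<cdot>\<^sub>m 1\<^sub>m n2)
    * four_block_mat ((1 - g) \<cdot>\<^sub>m 1\<^sub>m n1) ((- g) \<cdot>\<^sub>m (transpose_mat A1 * A2)) (0\<^sub>m n2 n1) (1\<^sub>m n2)"
proof -
  have "dim_col A1 = n1" "dim_col A2 = n2" using A1 A2 by auto
  then show ?thesis
    unfolding BGD_iter_def Let_def o1 o2 using A1 A2
    by (simp add: one_minus_lower_block_mat[of _ n2 n1] one_minus_upper_block_mat[of _ n1 n2])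
qed

lemma BGD_iter_carrier:
  assumes "A1 \<in> carrier_mat m n1" "A2 \<in> carrier_mat m n2"
  shows "BGD_iter A1 A2 g1 g2 \<in> carrier_mat (n1 + n2) (n1 + n2)"
  using assms unfolding BGD_iter_def Let_def
  by (intro mult_carrier_mat[of _ _ "n1 + n2"] minus_carrier_mat four_block_carrier_mat) auto

lemma HB_iter_carrier:
  assumes "A \<in> carrier_mat m n"
  shows "HB_iter A \<alpha> \<beta> \<in> carrier_mat (n + n) (n + n)"
  using assms unfolding HB_iter_def Let_def
  by (intro four_block_carrier_mat minus_carrier_mat) auto

lemma cmat_BGD_iter_orthonormal:
  assumes A1: "A1 \<in> carrier_mat m n1" and A2: "A2 \<in> carrier_mat m n2"
    and o1: "transpose_mat A1 * A1 = 1\<^sub>m n1" and o2: "transpose_mat A2 * A2 = 1\<^sub>m n2"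
  shows "cmat (BGD_iter A1 A2 g g) =
    four_block_mat (1\<^sub>m n1) (0\<^sub>m n1 n2) (of_real (- g) \<cdot>\<^sub>m cmat (transpose_mat A2 * A1)) (of_real (1 - g) \<cdot>\<^sub>m 1\<^sub>m n2)
    * four_block_mat (of_real (1 - g) \<cdot>\<^sub>m 1\<^sub>m n1) (of_real (- g) \<cdot>\<^sub>m cmat (transpose_mat A1 * A2)) (0\<^sub>m n2 n1) (1\<^sub>m n2)"
  using A1 A2 unfolding BGD_iter_orthonormal[OF assms]
  by (simp add: cmat_mult[of _ "n1 + n2" "n1 + n2" _ "n1 + n2"] cmat_four_block_mat[of _ n1 n1 _ n2 _ n2])

lemma cmat_HB_iter:
  assumes "A \<in> carrier_mat m n"
  shows "cmat (HB_iter A \<alpha> \<beta>) = four_block_mat (0\<^sub>m n n) (1\<^sub>m n) (of_real (- \<beta>) \<cdot>\<^sub>m 1\<^sub>m n)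
     (of_real (1 + \<beta>) \<cdot>\<^sub>m 1\<^sub>m n - of_real \<alpha> \<cdot>\<^sub>m cmat (transpose_mat A * A))"
proof -
  have "dim_col A = n" "transpose_mat A * A \<in> carrier_mat n n" using assms by auto
  then show ?thesis unfolding HB_iter_def Let_def
    by (subst cmat_four_block_mat[of _ n n _ n _ n]) (auto simp: cmat_minus[of _ n n])
qed

lemma cmat_gram_hcat_orthonormal:
  assumes A1: "A1 \<in> carrier_mat m n1" and A2: "A2 \<in> carrier_mat m n2"
    and o1: "transpose_mat A1 * A1 = 1\<^sub>m n1" and o2: "transpose_mat A2 * A2 = 1\<^sub>m n2"
  shows "cmat (transpose_mat (hcat A1 A2) * hcat A1 A2) =
    four_block_mat (1\<^sub>m n1) (cmat (transpose_mat A1 * A2)) (cmat (transpose_mat A2 * A1)) (1\<^sub>m n2)"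
  using A1 A2 unfolding gram_hcat[OF A1 A2] o1 o2
  by (simp add: cmat_four_block_mat[of _ n1 n1 _ n2 _ n2])

locale orthonormal_blocks =
  fixes A1 A2 :: "real mat" and m n1 n2 :: nat
  assumes A1: "A1 \<in> carrier_mat m n1" and A2: "A2 \<in> carrier_mat m n2"
    and orth1: "transpose_mat A1 * A1 = 1\<^sub>m n1" and orth2: "transpose_mat A2 * A2 = 1\<^sub>m n2"
    and n1_pos: "0 < n1"
begin

definition coupling :: "real mat" where
  "coupling = transpose_mat A2 * A1"

definition sigma_max :: real where
  "sigma_max = sqrt (spectral_radius (cmat (transpose_mat coupling * coupling)))"

lemma coupling_carrier: "coupling \<in> carrier_mat n2 n1"
  using A1 A2 by (simp add: coupling_def)

lemma transpose_coupling: "transpose_mat coupling = transpose_mat A1 * A2"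
  using A1 A2 by (simp add: coupling_def transpose_mult[of _ n2 m _ n1])

lemma coupling_gram_cmat:
  "cmat (transpose_mat A1 * A2) * cmat coupling = cmat (transpose_mat coupling * coupling)"
  using coupling_carrier by (simp add: transpose_coupling[symmetric] cmat_mult[of _ n1 n2 _ n1])

lemma sigma_max_nonneg: "0 \<le> sigma_max"
  using spectral_radius_nonneg[of _ n1] coupling_carrier n1_pos by (simp add: sigma_max_def)

lemma sigma_max_sq: "sigma_max\<^sup>2 = spectral_radius (cmat (transpose_mat coupling * coupling))"
  using spectral_radius_nonneg[of _ n1] coupling_carrier n1_pos by (simp add: sigma_max_def)

lemma coupling_eigenvalue_bounds:
  "eigenvector (cmat (transpose_mat A1 * A2) * cmat coupling) v \<mu> \<Longrightarrow>
    Im \<mu> = 0 \<and> 0 \<le> Re \<mu> \<and> Re \<mu> \<le> sigma_max\<^sup>2"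
  unfolding coupling_gram_cmat sigma_max_sq by (rule gram_eigenvalue_bounds[OF coupling_carrier n1_pos])

lemma coupling_top_eigenvector:
  obtains u where "eigenvector (cmat (transpose_mat A1 * A2) * cmat coupling) u (of_real (sigma_max\<^sup>2))"
  unfolding coupling_gram_cmat sigma_max_sq by (rule gram_spectral_radius_eigenvector[OF coupling_carrier n1_pos])

lemma gram_eigenvector_sigma_max:
  assumes "0 < sigma_max" "\<sigma>\<^sup>2 = 1"
  obtains w where "eigenvector (cmat (transpose_mat (hcat A1 A2) * hcat A1 A2)) w (of_real (1 + \<sigma> * sigma_max))"
proof -
  obtain u where u: "eigenvector (cmat (transpose_mat A1 * A2) * cmat coupling) u (of_real (sigma_max\<^sup>2))"
    by (rule coupling_top_eigenvector)
  have "cmat (transpose_mat A1 * A2) \<in> carrier_mat n1 n2" using A1 A2 by simp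
  from block_gram_eigenvector[OF _ this u assms] coupling_carrier show thesis
    by (intro that) (simp add: cmat_gram_hcat_orthonormal[OF A1 A2 orth1 orth2] coupling_def)
qed

lemma sigma_max_le_one: "sigma_max \<le> 1"
proof (cases "sigma_max = 0")
  case False
  then have "0 < sigma_max" using sigma_max_nonneg by simp
  then obtain w where "eigenvector (cmat (transpose_mat (hcat A1 A2) * hcat A1 A2)) w (of_real (1 - sigma_max))"
    using gram_eigenvector_sigma_max[of "- 1"] by auto
  from gram_eigenvalue_real_nonneg[OF hcat_carrier[OF A1 A2] this] show ?thesis by simp
qed simp

lemma spectral_radius_BGD_iter_le:
  assumes "1 \<le> g" "g\<^sup>2 * sigma_max\<^sup>2 \<le> 4 * (g - 1)"
  shows "spectral_radius (cmat (BGD_iter A1 A2 g g)) \<le> g - 1"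
proof (rule spectral_radius_le)
  show "cmat (BGD_iter A1 A2 g g) \<in> carrier_mat (n1 + n2) (n1 + n2)"
    using BGD_iter_carrier[OF A1 A2] by simp
  show "0 < n1 + n2" using n1_pos by simp
  have C: "cmat coupling \<in> carrier_mat n2 n1" and CT: "cmat (transpose_mat A1 * A2) \<in> carrier_mat n1 n2"
    using coupling_carrier A1 A2 by auto
  fix z v assume "eigenvector (cmat (BGD_iter A1 A2 g g)) v z"
  then show "cmod z \<le> g - 1"
    unfolding cmat_BGD_iter_orthonormal[OF A1 A2 orth1 orth2] coupling_def[symmetric]
    by (rule bgd_eigenvalue_norm_le[OF C CT _ assms coupling_eigenvalue_bounds])
qed

lemma rho_BGD_opt_le:
  assumes "1 \<le> g" "g\<^sup>2 * sigma_max\<^sup>2 \<le> 4 * (g - 1)"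
  shows "rho_BGD_opt A1 A2 \<le> g - 1"
proof -
  have "rho_BGD_opt A1 A2 \<le> spectral_radius (cmat (BGD_iter A1 A2 g g))"
    unfolding rho_BGD_opt_def
  proof (rule cInf_lower)
    show "bdd_below {spectral_radius (cmat (BGD_iter A1 A2 g1 g2)) |g1 g2. 0 < g1 \<and> 0 < g2}"
      using BGD_iter_carrier[OF A1 A2] n1_pos
      by (intro bdd_belowI[of _ 0]) (auto intro!: spectral_radius_nonneg[of _ "n1 + n2"])
    show "spectral_radius (cmat (BGD_iter A1 A2 g g))
        \<in> {spectral_radius (cmat (BGD_iter A1 A2 g1 g2)) |g1 g2. 0 < g1 \<and> 0 < g2}"
      using assms(1) by (intro CollectI exI[of _ g]) auto
  qed
  with spectral_radius_BGD_iter_le[OF assms] show ?thesis by simp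
qed

lemma spectral_radius_HB_iter_ge:
  assumes \<alpha>: "0 < \<alpha>" and \<beta>: "0 \<le> \<beta>"
  shows "hb_rate sigma_max \<le> spectral_radius (cmat (HB_iter (hcat A1 A2) \<alpha> \<beta>))"
proof -
  let ?N = "cmat (HB_iter (hcat A1 A2) \<alpha> \<beta>)"
  have A: "hcat A1 A2 \<in> carrier_mat m (n1 + n2)" by (rule hcat_carrier[OF A1 A2])
  have N: "?N \<in> carrier_mat (n1 + n2 + (n1 + n2)) (n1 + n2 + (n1 + n2))"
    using HB_iter_carrier[OF A] by simp
  have pos: "0 < n1 + n2 + (n1 + n2)" using n1_pos by simp
  show ?thesis
  proof (cases "sigma_max = 0")
    case True
    then show ?thesis using spectral_radius_nonneg[OF N pos] by (simp add: hb_rate_def)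
  next
    case False
    then have s: "0 < sigma_max" using sigma_max_nonneg by simp
    have root: "cmod (dominant_root (1 + \<beta> - \<alpha> * (1 + \<sigma> * sigma_max)) \<beta>) \<le> spectral_radius ?N"
      if \<sigma>: "\<sigma>\<^sup>2 = 1" for \<sigma>
    proof -
      obtain w where "eigenvector (cmat (transpose_mat (hcat A1 A2) * hcat A1 A2)) w (of_real (1 + \<sigma> * sigma_max))"
        using gram_eigenvector_sigma_max[OF s \<sigma>] .
      from heavy_ball_eigenvector[OF _ this dominant_root_is_root] A
      have "eigenvector ?N (w @\<^sub>v (dominant_root (1 + \<beta> - \<alpha> * (1 + \<sigma> * sigma_max)) \<beta> \<cdot>\<^sub>v w))
          (dominant_root (1 + \<beta> - \<alpha> * (1 + \<sigma> * sigma_max)) \<beta>)"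
        unfolding cmat_HB_iter[OF A] by simp
      then show ?thesis by (rule eigenvalue_norm_le_spectral_radius[OF N pos])
    qed
    have s1: "0 \<le> sigma_max" "sigma_max \<le> 1" using sigma_max_nonneg sigma_max_le_one by auto
    have "hb_rate sigma_max \<le> cmod (dominant_root (1 + \<beta> - \<alpha> * (1 - sigma_max)) \<beta>)
        \<or> hb_rate sigma_max \<le> cmod (dominant_root (1 + \<beta> - \<alpha> * (1 + sigma_max)) \<beta>)"
      using s1 by (intro heavy_ball_dominant_root_ge[OF hb_rate_pos[OF s1 s] hb_rate_le_one[OF s1] _ _
          hb_rate_condition_number[OF s1] \<alpha> \<beta>]) auto
    with root[of "- 1"] root[of 1] show ?thesis by auto
  qed
qed

lemma rho_HB_opt_ge: "hb_rate sigma_max \<le> rho_HB_opt (hcat A1 A2)"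
  unfolding rho_HB_opt_def
proof (rule cInf_greatest)
  show "{spectral_radius (cmat (HB_iter (hcat A1 A2) \<alpha> \<beta>)) |\<alpha> \<beta>. 0 < \<alpha> \<and> 0 \<le> \<beta>} \<noteq> {}"
  proof -
    have "spectral_radius (cmat (HB_iter (hcat A1 A2) 1 1))
        \<in> {spectral_radius (cmat (HB_iter (hcat A1 A2) \<alpha> \<beta>)) |\<alpha> \<beta>. 0 < \<alpha> \<and> 0 \<le> \<beta>}"
      by (intro CollectI exI[of _ 1]) auto
    then show ?thesis by blast
  qed
qed (use spectral_radius_HB_iter_ge in auto)

lemma rho_BGD_opt_le_rho_HB_opt_sq: "rho_BGD_opt A1 A2 \<le> (rho_HB_opt (hcat A1 A2))\<^sup>2"
proof -
  define q where "q = hb_rate sigma_max"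
  have s1: "0 \<le> sigma_max" "sigma_max \<le> 1" using sigma_max_nonneg sigma_max_le_one by auto
  have "(sigma_max * (1 + q\<^sup>2))\<^sup>2 = (2 * q)\<^sup>2" using hb_rate_equation[OF s1] by (simp add: q_def)
  then have "(1 + q\<^sup>2)\<^sup>2 * sigma_max\<^sup>2 = 4 * (1 + q\<^sup>2 - 1)" by (simp add: power_mult_distrib ac_simps)
  then have "rho_BGD_opt A1 A2 \<le> q\<^sup>2"
    using rho_BGD_opt_le[of "1 + q\<^sup>2"] by simp
  also have "q\<^sup>2 \<le> (rho_HB_opt (hcat A1 A2))\<^sup>2"
    using rho_HB_opt_ge hb_rate_nonneg[OF s1] unfolding q_def by (intro power_mono) auto
  finally show ?thesis .
qed

end

theorem theorem1:
  fixes A1 A2 :: "real mat" and m n1 n2 :: nat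
  assumes "A1 \<in> carrier_mat m n1" and "A2 \<in> carrier_mat m n2"
    and "vec_space.rank m (hcat A1 A2) = n1 + n2"
    and "transpose_mat A1 * A1 = 1\<^sub>m n1"
    and "transpose_mat A2 * A2 = 1\<^sub>m n2"
    and "transpose_mat A2 * A1 \<noteq> 0\<^sub>m n2 n1"
  shows "rho_BGD_opt A1 A2 \<le> (rho_HB_opt (hcat A1 A2))\<^sup>2"
proof -
  have "0 < n1"
  proof (rule ccontr)
    assume "\<not> 0 < n1"
    then have "transpose_mat A2 * A1 = 0\<^sub>m n2 n1" using assms(1,2) by (intro eq_matI) auto
    with assms(6) show False by contradiction
  qed
  then interpret orthonormal_blocks A1 A2 m n1 n2
    using assms(1,2,4,5) by unfold_locales
  show ?thesis by (rule rho_BGD_opt_le_rho_HB_opt_sq)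
qed

end
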